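(* Let $\mathcal{A}=\{A_1,\dots,A_m\}$ be a bimodal collection of pairwise disjoint nonempty subsets of a finite abelian group $G$, with internal difference groups $H_1,\dots,H_m$, such that $|A_i|=|H_i|$ for every $i$. Let $H=H_1+H_2+\dots+H_m$. Then each $A_i$ is a coset of $H_i$, and the sets $A_1,\dots,A_m$ arise from a subdivision of cosets of $H$, i.e. $A_1\cup\dots\cup A_m$ is a union of cosets of $H$ and each $A_i$ is contained in a single coset of $H$.
   Context: $G$ is written additively. The internal difference group $H_i$ of $A_i$ is the subgroup generated by all $x-y$ with $x,y\in A_i$; $A_i$ lies in a single coset of $H_i$ and $|A_i|\le|H_i|$. A collection $\{A_1,\dots,A_m\}$ of pairwise disjoint subsets of $G$ is bimodal if for every $i$ and every $\delta\in G\setminus\{0\}$, the number $N_i(\delta)$ of pairs $(a,b)$ with $a\in A_i$, $b\in A_j$ for some $j\neq i$, and $a-b=\delta$, satisfies $N_i(\delta)\in\{0,|A_i|\}$. *)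

theory Defs
  imports Main
begin

definition is_subgroup :: "'a::ab_group_add set \<Rightarrow> bool" where
  "is_subgroup H \<longleftrightarrow> 0 \<in> H \<and> (\<forall>x\<in>H. \<forall>y\<in>H. x + y \<in> H \<and> - x \<in> H)"

definition gen_subgroup :: "'a::ab_group_add set \<Rightarrow> 'a set" where
  "gen_subgroup S = \<Inter>{H. is_subgroup H \<and> S \<subseteq> H}"

definition diff_group :: "'a::ab_group_add set \<Rightarrow> 'a set" where
  "diff_group A = gen_subgroup {x - y | x y. x \<in> A \<and> y \<in> A}"

definition is_coset :: "'a::ab_group_add set \<Rightarrow> 'a set \<Rightarrow> bool" where
  "is_coset C H \<longleftrightarrow> (\<exists>x. C = (\<lambda>h. x + h) ` H)"

definition N_count :: "(nat \<Rightarrow> 'a::ab_group_add set) \<Rightarrow> nat \<Rightarrow> nat \<Rightarrow> 'a \<Rightarrow> nat" where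
  "N_count A m i \<delta> = card {(a, b). a \<in> A i \<and> (\<exists>j<m. j \<noteq> i \<and> b \<in> A j) \<and> a - b = \<delta>}"

definition bimodal :: "(nat \<Rightarrow> 'a::ab_group_add set) \<Rightarrow> nat \<Rightarrow> bool" where
  "bimodal A m \<longleftrightarrow> (\<forall>i<m. \<forall>\<delta>. \<delta> \<noteq> 0 \<longrightarrow> N_count A m i \<delta> \<in> {0, card (A i)})"

definition sum_groups :: "(nat \<Rightarrow> 'a::ab_group_add set) \<Rightarrow> nat \<Rightarrow> 'a set" where
  "sum_groups Hs m = {(\<Sum>i<m. h i) | h. \<forall>i<m. h i \<in> Hs i}"

end

theory Submission
  imports Defs
begin

text \<open>Since \<open>A\<^sub>i \<subseteq> a + H\<^sub>i\<close> for any \<open>a \<in> A\<^sub>i\<close> and both sets have the same size,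
  \<open>A\<^sub>i\<close> is a coset of \<open>H\<^sub>i\<close>. Let \<open>U = A\<^sub>1 \<union> \<dots> \<union> A\<^sub>m\<close>. For \<open>a \<in> A\<^sub>i\<close>, \<open>b \<in> A\<^sub>j\<close> with
  \<open>i \<noteq> j\<close>, the difference \<open>\<delta> = b - a\<close> is nonzero and realised at least once, so bimodality
  forces \<open>N\<^sub>j(\<delta>) = |A\<^sub>j|\<close>: every \<open>x \<in> A\<^sub>j\<close> has \<open>x - \<delta> \<in> U\<close>. Taking \<open>x = b + h\<close> with
  \<open>h \<in> H\<^sub>j\<close> gives \<open>a + h \<in> U\<close>; hence \<open>U + H\<^sub>j \<subseteq> U\<close> for all \<open>j\<close>, so \<open>U + H \<subseteq> U\<close> and \<open>U\<close>
  is a union of cosets of \<open>H\<close>, while \<open>A\<^sub>i = a + H\<^sub>i \<subseteq> a + H\<close>.\<close>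

lemma is_subgroup_gen_subgroup: "is_subgroup (gen_subgroup S)"
  unfolding gen_subgroup_def is_subgroup_def by blast

lemma subset_gen_subgroup: "S \<subseteq> gen_subgroup S"
  unfolding gen_subgroup_def by blast

lemma zero_in_diff_group: "0 \<in> diff_group A"
  using is_subgroup_gen_subgroup unfolding diff_group_def is_subgroup_def by blast

lemma diff_in_diff_group:
  assumes "x \<in> A" "y \<in> A"
  shows "x - y \<in> diff_group A"
  unfolding diff_group_def using assms by (intro subsetD[OF subset_gen_subgroup]) blast

lemma translate_diff_group_eq_if_card_eq:
  assumes "finite A" "card A = card (diff_group A)" "a \<in> A"
  shows "(\<lambda>h. a + h) ` diff_group A = A"
proof -
  have "card (diff_group A) \<noteq> 0"
    using assms by (metis card_0_eq empty_iff)
  then have "finite (diff_group A)"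
    using card_ge_0_finite by blast
  moreover have "A \<subseteq> (\<lambda>h. a + h) ` diff_group A"
  proof
    fix y assume "y \<in> A"
    then have "y - a \<in> diff_group A"
      using assms(3) by (rule diff_in_diff_group)
    then show "y \<in> (\<lambda>h. a + h) ` diff_group A"
      by (intro image_eqI[of _ _ "y - a"]) auto
  qed
  moreover have "card ((\<lambda>h. a + h) ` diff_group A) = card A"
    using assms(2) by (simp add: card_image inj_on_def)
  ultimately show ?thesis
    by (intro card_subset_eq[symmetric]) auto
qed

definition N_pairs :: "(nat \<Rightarrow> 'a::ab_group_add set) \<Rightarrow> nat \<Rightarrow> nat \<Rightarrow> 'a \<Rightarrow> ('a \<times> 'a) set" where
  "N_pairs A m j \<delta> = {(a, b). a \<in> A j \<and> (\<exists>k<m. k \<noteq> j \<and> b \<in> A k) \<and> a - b = \<delta>}"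

lemma N_count_eq_card_N_pairs: "N_count A m j \<delta> = card (N_pairs A m j \<delta>)"
  unfolding N_count_def N_pairs_def ..

lemma inj_on_fst_N_pairs: "inj_on fst (N_pairs A m j \<delta>)"
  unfolding N_pairs_def by (auto simp: inj_on_def)

lemma fst_N_pairs_subset: "fst ` N_pairs A m j \<delta> \<subseteq> A j"
  unfolding N_pairs_def by auto

lemma finite_N_pairs: "finite (A j) \<Longrightarrow> finite (N_pairs A m j \<delta>)"
  using finite_imageD[OF _ inj_on_fst_N_pairs] fst_N_pairs_subset finite_subset by metis

lemma N_count_nonzero:
  assumes "finite (A j)" "x \<in> A j" "k < m" "k \<noteq> j" "y \<in> A k"
  shows "N_count A m j (x - y) \<noteq> 0"
proof -
  have "(x, y) \<in> N_pairs A m j (x - y)"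
    using assms unfolding N_pairs_def by auto
  then show ?thesis
    using finite_N_pairs[of A j m "x - y", OF assms(1)]
    by (auto simp: N_count_eq_card_N_pairs card_eq_0_iff)
qed

lemma N_count_eq_card_imp_partner:
  assumes "finite (A j)" "N_count A m j \<delta> = card (A j)" "x \<in> A j"
  shows "\<exists>k<m. k \<noteq> j \<and> x - \<delta> \<in> A k"
proof -
  have "card (fst ` N_pairs A m j \<delta>) = card (A j)"
    using assms(2) card_image[OF inj_on_fst_N_pairs[of A m j \<delta>]]
    by (simp add: N_count_eq_card_N_pairs)
  then have "fst ` N_pairs A m j \<delta> = A j"
    using card_subset_eq[OF assms(1) fst_N_pairs_subset[of A m j \<delta>]] by simp
  then have "x \<in> fst ` N_pairs A m j \<delta>"
    using assms(3) by simp
  then obtain b where "(x, b) \<in> N_pairs A m j \<delta>"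
    by (metis imageE prod.collapse)
  then obtain k where k: "k < m" "k \<noteq> j" and "b \<in> A k" "x - b = \<delta>"
    unfolding N_pairs_def by blast
  then have "x - \<delta> \<in> A k"
    by force
  with k show ?thesis
    by blast
qed

lemma bimodal_translate_into_union:
  assumes disj: "\<forall>i<m. \<forall>j<m. i \<noteq> j \<longrightarrow> A i \<inter> A j = {}"
    and bim: "bimodal A m" and fin: "finite (A j)"
    and "i < m" "j < m" "i \<noteq> j" "a \<in> A i" "b \<in> A j" "x \<in> A j"
  shows "x - (b - a) \<in> (\<Union>k<m. A k)"
proof -
  have "A i \<inter> A j = {}"
    using disj \<open>i < m\<close> \<open>j < m\<close> \<open>i \<noteq> j\<close> by blast
  then have "b - a \<noteq> 0"
    using \<open>a \<in> A i\<close> \<open>b \<in> A j\<close> by auto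
  then have "N_count A m j (b - a) \<in> {0, card (A j)}"
    using bim \<open>j < m\<close> unfolding bimodal_def by blast
  moreover have "N_count A m j (b - a) \<noteq> 0"
    using N_count_nonzero[OF fin \<open>b \<in> A j\<close> \<open>i < m\<close> \<open>i \<noteq> j\<close> \<open>a \<in> A i\<close>] .
  ultimately have "N_count A m j (b - a) = card (A j)"
    by simp
  then obtain k where "k < m" "x - (b - a) \<in> A k"
    using N_count_eq_card_imp_partner[of A j m "b - a" x] fin \<open>x \<in> A j\<close> by blast
  then show ?thesis
    by blast
qed

lemma add_closed_sum_groups:
  assumes closed: "\<forall>j<m. \<forall>u\<in>U. \<forall>h\<in>Hs j. u + h \<in> U"
  shows "\<forall>u\<in>U. \<forall>h\<in>sum_groups Hs m. u + h \<in> U"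
proof (intro ballI)
  fix u h assume "u \<in> U" "h \<in> sum_groups Hs m"
  then obtain g where g: "h = (\<Sum>j<m. g j)" "\<forall>j<m. g j \<in> Hs j"
    unfolding sum_groups_def by blast
  have "u + (\<Sum>j<n. g j) \<in> U" if "n \<le> m" for n
    using that
  proof (induction n)
    case 0
    then show ?case using \<open>u \<in> U\<close> by simp
  next
    case (Suc n)
    then have "u + (\<Sum>j<n. g j) \<in> U" "n < m"
      by simp_all
    then have "u + (\<Sum>j<n. g j) + g n \<in> U"
      using closed g(2) by blast
    then show ?case
      by (simp add: add.assoc)
  qed
  then show "u + h \<in> U"
    using g(1) by simp
qed

lemma subset_sum_groups:
  assumes "\<forall>j<m. 0 \<in> Hs j" "i < m"
  shows "Hs i \<subseteq> sum_groups Hs m"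
proof
  fix h assume "h \<in> Hs i"
  then show "h \<in> sum_groups Hs m"
    unfolding sum_groups_def mem_Collect_eq
    by (intro exI[of _ "\<lambda>j. if j = i then h else 0"]) (simp add: assms)
qed

lemma zero_in_sum_groups:
  assumes "\<forall>j<m. 0 \<in> Hs j"
  shows "0 \<in> sum_groups Hs m"
  unfolding sum_groups_def mem_Collect_eq
  by (intro exI[of _ "\<lambda>_. 0"]) (simp add: assms)

lemma coset_subset_coset_sum_groups:
  assumes "\<forall>j<m. 0 \<in> Hs j" "i < m" "is_coset B (Hs i)"
  shows "\<exists>C. is_coset C (sum_groups Hs m) \<and> B \<subseteq> C"
proof -
  obtain x where x: "B = (\<lambda>h. x + h) ` Hs i"
    using assms(3) unfolding is_coset_def by blast
  have "B \<subseteq> (\<lambda>h. x + h) ` sum_groups Hs m"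
    unfolding x by (rule image_mono[OF subset_sum_groups[OF assms(1,2)]])
  moreover have "is_coset ((\<lambda>h. x + h) ` sum_groups Hs m) (sum_groups Hs m)"
    unfolding is_coset_def by blast
  ultimately show ?thesis
    by blast
qed

lemma union_add_diff_group_closed:
  fixes A :: "nat \<Rightarrow> 'a::ab_group_add set"
  assumes disj: "\<forall>i<m. \<forall>j<m. i \<noteq> j \<longrightarrow> A i \<inter> A j = {}"
    and nonempty: "\<forall>i<m. A i \<noteq> {}"
    and bim: "bimodal A m"
    and fin: "\<forall>i<m. finite (A i)"
    and coset: "\<forall>i<m. \<forall>a\<in>A i. (\<lambda>h. a + h) ` diff_group (A i) = A i"
    and "j < m" "u \<in> (\<Union>i<m. A i)" "h \<in> diff_group (A j)"
  shows "u + h \<in> (\<Union>i<m. A i)"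
proof -
  obtain i where i: "i < m" "u \<in> A i"
    using \<open>u \<in> (\<Union>i<m. A i)\<close> by blast
  show ?thesis
  proof (cases "i = j")
    case True
    have "u + h \<in> (\<lambda>h. u + h) ` diff_group (A i)"
      using \<open>h \<in> diff_group (A j)\<close> True by blast
    then show ?thesis
      using i unfolding coset[rule_format, OF i] by blast
  next
    case False
    obtain b where b: "b \<in> A j"
      using \<open>j < m\<close> nonempty by blast
    have "b + h \<in> (\<lambda>h. b + h) ` diff_group (A j)"
      using \<open>h \<in> diff_group (A j)\<close> by (rule imageI)
    then have "b + h \<in> A j"
      unfolding coset[rule_format, OF \<open>j < m\<close> b] .
    then have "b + h - (b - u) \<in> (\<Union>i<m. A i)"
      using fin \<open>j < m\<close> False i b
      by (intro bimodal_translate_into_union[OF disj bim]) auto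
    then show ?thesis
      by (simp add: algebra_simps)
  qed
qed

lemma Union_cosets_if_add_closed:
  fixes U H :: "'a::ab_group_add set"
  assumes "0 \<in> H" "\<forall>u\<in>U. \<forall>h\<in>H. u + h \<in> U"
  shows "\<exists>\<C>. (\<forall>C\<in>\<C>. is_coset C H) \<and> U = \<Union>\<C>"
proof (intro exI conjI)
  show "\<forall>C\<in>(\<lambda>u. (\<lambda>h. u + h) ` H) ` U. is_coset C H"
    unfolding is_coset_def by blast
  show "U = \<Union>((\<lambda>u. (\<lambda>h. u + h) ` H) ` U)"
  proof
    show "U \<subseteq> \<Union>((\<lambda>u. (\<lambda>h. u + h) ` H) ` U)"
    proof
      fix u assume "u \<in> U"
      moreover have "u = u + 0"
        by simp
      ultimately show "u \<in> \<Union>((\<lambda>u. (\<lambda>h. u + h) ` H) ` U)"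
        using \<open>0 \<in> H\<close> by blast
    qed
    show "\<Union>((\<lambda>u. (\<lambda>h. u + h) ` H) ` U) \<subseteq> U"
      using assms(2) by blast
  qed
qed

theorem theorem3p18:
  fixes A :: "nat \<Rightarrow> 'a::{finite, ab_group_add} set" and m :: nat
  assumes disj: "\<forall>i<m. \<forall>j<m. i \<noteq> j \<longrightarrow> A i \<inter> A j = {}"
    and nonempty: "\<forall>i<m. A i \<noteq> {}"
    and bim: "bimodal A m"
    and eqcard: "\<forall>i<m. card (A i) = card (diff_group (A i))"
  shows "(\<forall>i<m. is_coset (A i) (diff_group (A i)))
       \<and> (\<exists>\<C>. (\<forall>C\<in>\<C>. is_coset C (sum_groups (\<lambda>i. diff_group (A i)) m))
              \<and> (\<Union>i<m. A i) = \<Union>\<C>)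
       \<and> (\<forall>i<m. \<exists>C. is_coset C (sum_groups (\<lambda>i. diff_group (A i)) m) \<and> A i \<subseteq> C)"
proof -
  let ?H = "sum_groups (\<lambda>i. diff_group (A i)) m"
  have zero: "\<forall>i<m. 0 \<in> diff_group (A i)"
    by (simp add: zero_in_diff_group)
  have coset: "\<forall>i<m. \<forall>a\<in>A i. (\<lambda>h. a + h) ` diff_group (A i) = A i"
    using eqcard by (simp add: translate_diff_group_eq_if_card_eq)
  have "\<forall>j<m. \<forall>u\<in>(\<Union>i<m. A i). \<forall>h\<in>diff_group (A j). u + h \<in> (\<Union>i<m. A i)"
    using union_add_diff_group_closed[OF disj nonempty bim _ coset] by simp
  then have "\<exists>\<C>. (\<forall>C\<in>\<C>. is_coset C ?H) \<and> (\<Union>i<m. A i) = \<Union>\<C>"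
    by (intro Union_cosets_if_add_closed zero_in_sum_groups[OF zero] add_closed_sum_groups)
  moreover have cosets: "\<forall>i<m. is_coset (A i) (diff_group (A i))"
  proof (intro allI impI)
    fix i assume "i < m"
    then obtain a where "a \<in> A i"
      using nonempty by blast
    then have "A i = (\<lambda>h. a + h) ` diff_group (A i)"
      using coset \<open>i < m\<close> by simp
    then show "is_coset (A i) (diff_group (A i))"
      unfolding is_coset_def by (rule exI)
  qed
  moreover have "\<forall>i<m. \<exists>C. is_coset C ?H \<and> A i \<subseteq> C"
    using coset_subset_coset_sum_groups[OF zero] cosets by blast
  ultimately show ?thesis
    by blast
qed

end
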